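(* Let $\mathcal{X},\mathcal{Y}$ be finite alphabets and $P_{XY}$ a joint PMF on $\mathcal{X}\times\mathcal{Y}$ with $P_X$ fully supported on $\mathcal{X}$. Let $(X^N,Y^N)\sim P_{XY}^{\otimes N}$, let $M\in\mathbb{N}$, $\beta>0$, $L=\beta\log M$ and $N=ML$ (integer constraints ignored). Split $X^N$ into the $M$ consecutive non-overlapping fragments $\boldsymbol{X}(i)=X_{(i-1)L+1}^{iL}$, $i\in[M]$. Let $\hat{X}^N$ be a maximum-likelihood reconstruction, i.e. $\hat X^N\in\arg\max_{\tilde X^N\in\mathcal{A}_L(X^N)}\mathbb{P}[Y^N\mid \tilde X^N]$, where $\mathcal{A}_L(X^N)=\{(\boldsymbol{X}(\pi(1)),\ldots,\boldsymbol{X}(\pi(M))):\pi\in S_M\}$, with fragments $\hat{\boldsymbol{X}}(i)=\hat X_{(i-1)L+1}^{iL}$. Let $\Xi=\frac1M\sum_{i\in[M]}\mathbb{1}\{\hat{\boldsymbol{X}}(i)\neq\boldsymbol{X}(i)\}$ and $\mathsf{FP}(\xi)=\mathbb{P}[\Xi\geq\xi,\ \hat X^N\neq X^N]$ for $\xi\in[0,1)$. Define $$\psi_2(P_{XY})=\min_{Q_{X_1X_2}\in\mathcal{P}(\mathcal{X}^2)}\Big\{\tfrac12 D_{\mathrm{KL}}(Q_{X_1X_2}\,\|\,P_X^{\otimes 2})+d_{P_{Y|X}}(Q_{X_1X_2})\Big\}.$$ If $\beta>1/\psi_2(P_{XY})$, then as $M\to\infty$: (i) $\mathsf{FP}(0)=O\big(M^{2[1-\beta\psi_2(P_{XY})]}\big)$,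 with a constant depending on $P_{XY}$; (ii) for every $\xi\in(0,1)$, $\mathsf{FP}(\xi)\leq\exp\!\Big[-M\log M\cdot\xi\big(\beta\psi_2(P_{XY})-1-O(1/M)\big)\Big]$.
   Context: For $x_1,x_2\in\mathcal{X}$ the Bhattacharyya distance is $d_{P_{Y|X}}(x_1,x_2)=-\log\sum_{y\in\mathcal{Y}}\sqrt{P_{Y|X}(y|x_1)P_{Y|X}(y|x_2)}$, and for a joint PMF $Q_{X_1X_2}$ on $\mathcal{X}^2$, $d_{P_{Y|X}}(Q_{X_1X_2})=\sum_{x_1,x_2}Q_{X_1X_2}(x_1,x_2)\,d_{P_{Y|X}}(x_1,x_2)$. $\mathcal{P}(\mathcal{X}^2)$ is the probability simplex on $\mathcal{X}^2$, $S_M$ the symmetric group on $[M]=\{1,\dots,M\}$, and logarithms are natural. *)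

theory Defs
  imports Complex_Main "HOL-Library.Extended_Real" "HOL-Library.FuncSet"
    "HOL-Combinatorics.Permutations"
begin

definition PX :: "('x::finite \<Rightarrow> 'y::finite \<Rightarrow> real) \<Rightarrow> 'x \<Rightarrow> real" where
  "PX p x = (\<Sum>y\<in>UNIV. p x y)"

definition chan :: "('x::finite \<Rightarrow> 'y::finite \<Rightarrow> real) \<Rightarrow> 'x \<Rightarrow> 'y \<Rightarrow> real" where
  "chan p x y = p x y / PX p x"

definition is_joint_pmf :: "('x::finite \<Rightarrow> 'y::finite \<Rightarrow> real) \<Rightarrow> bool" where
  "is_joint_pmf p \<longleftrightarrow> (\<forall>x y. 0 \<le> p x y) \<and> (\<Sum>x\<in>UNIV. \<Sum>y\<in>UNIV. p x y) = 1"

definition bhat_coeff :: "('x::finite \<Rightarrow> 'y::finite \<Rightarrow> real) \<Rightarrow> 'x \<Rightarrow> 'x \<Rightarrow> real" where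
  "bhat_coeff p x1 x2 = (\<Sum>y\<in>UNIV. sqrt (chan p x1 y * chan p x2 y))"

definition bhat_dist :: "('x::finite \<Rightarrow> 'y::finite \<Rightarrow> real) \<Rightarrow> 'x \<Rightarrow> 'x \<Rightarrow> ereal" where
  "bhat_dist p x1 x2 =
     (if bhat_coeff p x1 x2 = 0 then \<infinity> else ereal (- ln (bhat_coeff p x1 x2)))"

definition bhat_dist_joint :: "('x::finite \<Rightarrow> 'y::finite \<Rightarrow> real) \<Rightarrow> ('x \<times> 'x \<Rightarrow> real) \<Rightarrow> ereal" where
  "bhat_dist_joint p Q = (\<Sum>z\<in>UNIV. ereal (Q z) * bhat_dist p (fst z) (snd z))"

definition simplex2 :: "('x::finite \<times> 'x \<Rightarrow> real) set" where
  "simplex2 = {Q. (\<forall>z. 0 \<le> Q z) \<and> (\<Sum>z\<in>UNIV. Q z) = 1}"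

definition KL2 :: "('x::finite \<times> 'x \<Rightarrow> real) \<Rightarrow> ('x \<Rightarrow> real) \<Rightarrow> real" where
  "KL2 Q P = (\<Sum>z\<in>UNIV. if Q z = 0 then 0 else Q z * ln (Q z / (P (fst z) * P (snd z))))"

definition psi2 :: "('x::finite \<Rightarrow> 'y::finite \<Rightarrow> real) \<Rightarrow> ereal" where
  "psi2 p = (INF Q\<in>simplex2. ereal (KL2 Q (PX p) / 2) + bhat_dist_joint p Q)"

definition frag_len :: "real \<Rightarrow> nat \<Rightarrow> nat" where
  "frag_len \<beta> M = nat \<lceil>\<beta> * ln (real M)\<rceil>"

definition seqs :: "nat \<Rightarrow> (nat \<Rightarrow> 'a) set" where
  "seqs N = PiE {..<N} (\<lambda>_. UNIV)"

text \<open>(X(pi(1)),...,X(pi(M))) with 0-based fragment indices.\<close>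
definition rearr :: "nat \<Rightarrow> nat \<Rightarrow> (nat \<Rightarrow> nat) \<Rightarrow> (nat \<Rightarrow> 'a) \<Rightarrow> nat \<Rightarrow> 'a" where
  "rearr M L \<sigma> xs k = (if k < M * L then xs (\<sigma> (k div L) * L + k mod L) else undefined)"

definition recon_set :: "nat \<Rightarrow> nat \<Rightarrow> (nat \<Rightarrow> 'a) \<Rightarrow> (nat \<Rightarrow> 'a) set" where
  "recon_set M L xs = {rearr M L \<sigma> xs | \<sigma>. \<sigma> permutes {..<M}}"

definition likelihood :: "('x::finite \<Rightarrow> 'y::finite \<Rightarrow> real) \<Rightarrow> nat \<Rightarrow> (nat \<Rightarrow> 'x) \<Rightarrow> (nat \<Rightarrow> 'y) \<Rightarrow> real" where
  "likelihood p N x ys = (\<Prod>k<N. chan p (x k) (ys k))"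

definition is_ML :: "('x::finite \<Rightarrow> 'y::finite \<Rightarrow> real) \<Rightarrow> nat \<Rightarrow> nat \<Rightarrow> (nat \<Rightarrow> 'x) \<Rightarrow> (nat \<Rightarrow> 'y) \<Rightarrow> (nat \<Rightarrow> 'x) \<Rightarrow> bool" where
  "is_ML p M L xs ys xhat \<longleftrightarrow> xhat \<in> recon_set M L xs \<and>
     (\<forall>x'\<in>recon_set M L xs. likelihood p (M * L) x' ys \<le> likelihood p (M * L) xhat ys)"

definition prob_iid :: "('x::finite \<Rightarrow> 'y::finite \<Rightarrow> real) \<Rightarrow> nat \<Rightarrow> ((nat \<Rightarrow> 'x) \<Rightarrow> (nat \<Rightarrow> 'y) \<Rightarrow> bool) \<Rightarrow> real" where
  "prob_iid p N E = (\<Sum>xs\<in>seqs N. \<Sum>ys\<in>seqs N.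
      if E xs ys then (\<Prod>k<N. p (xs k) (ys k)) else 0)"

definition Xi :: "nat \<Rightarrow> nat \<Rightarrow> (nat \<Rightarrow> 'x) \<Rightarrow> (nat \<Rightarrow> 'x) \<Rightarrow> real" where
  "Xi M L xs xhat = (1 / real M) *
     (\<Sum>i<M. if (\<exists>j<L. xhat (i * L + j) \<noteq> xs (i * L + j)) then 1 else 0)"

definition FP :: "('x::finite \<Rightarrow> 'y::finite \<Rightarrow> real) \<Rightarrow> real
     \<Rightarrow> (nat \<Rightarrow> (nat \<Rightarrow> 'x) \<Rightarrow> (nat \<Rightarrow> 'y) \<Rightarrow> (nat \<Rightarrow> 'x)) \<Rightarrow> nat \<Rightarrow> real \<Rightarrow> real" where
  "FP p \<beta> dec M \<xi> =
     (let L = frag_len \<beta> M; N = M * L in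
      prob_iid p N (\<lambda>xs ys. let xhat = dec M xs ys in
         Xi M L xs xhat \<ge> \<xi> \<and> (\<exists>k<N. xhat k \<noteq> xs k)))"

end

(*
  An ML reconstruction with misplaced fragments is the rearrangement of X^N by some block
  permutation sigma that is at least as likely as X^N itself.  By the Bhattacharyya bound the
  probability of this event for a fixed sigma is at most the sum over x of
  prod_k A(x (pi k), x k), where pi is the induced permutation of positions and
  A(u,v) = sqrt (P u) B(u,v) sqrt (P v) is the symmetrised Bhattacharyya matrix.  This sum
  factorises over the cycles of pi into traces of powers of A; a fixed position contributes
  tr A = 1 and, by Cauchy-Schwarz, every moved position at most the Frobenius norm sqrt Z.
  Evaluating the objective of psi2 at the tilted distribution Q(u,v) ~ P u P v B(u,v)^2 gives
  psi2 <= -ln Z / 2, so each of the L = beta ln M positions of a moved block costs a factor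
  exp (-psi2), i.e. a moved block costs M^(-beta psi2).  At most M^k permutations move k blocks,
  so the union bound over all sigma moving at least K blocks is a geometric series in
  M^(1 - beta psi2) < 1/2, dominated by its first term; K = 2 for FP(0) and K = ceil (xi M)
  for FP(xi).
*)

theory Submission
  imports Defs "HOL-Analysis.Convex"
begin

section \<open>Traces of matrix products along the cycles of a permutation\<close>

definition mat_mult :: "('x::finite \<Rightarrow> 'x \<Rightarrow> real) \<Rightarrow> ('x \<Rightarrow> 'x \<Rightarrow> real) \<Rightarrow> 'x \<Rightarrow> 'x \<Rightarrow> real" where
  "mat_mult A B u w = (\<Sum>v\<in>UNIV. A u v * B v w)"

definition mat_trace :: "('x::finite \<Rightarrow> 'x \<Rightarrow> real) \<Rightarrow> real" where
  "mat_trace A = (\<Sum>u\<in>UNIV. A u u)"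

definition frob_norm :: "('x::finite \<Rightarrow> 'x \<Rightarrow> real) \<Rightarrow> real" where
  "frob_norm A = sqrt (\<Sum>u\<in>UNIV. \<Sum>v\<in>UNIV. (A u v)\<^sup>2)"

lemma frob_norm_nonneg: "0 \<le> frob_norm A"
  unfolding frob_norm_def by (simp add: sum_nonneg)

lemma mat_trace_nonneg: "(\<And>u v. 0 \<le> A u v) \<Longrightarrow> 0 \<le> mat_trace A"
  unfolding mat_trace_def by (simp add: sum_nonneg)

lemma sum_UNIV_pairs:
  "(\<Sum>u\<in>UNIV. \<Sum>v\<in>UNIV. f u v) = (\<Sum>z\<in>(UNIV::('a::finite \<times> 'b::finite) set). f (fst z) (snd z))"
  by (simp add: sum.cartesian_product' UNIV_Times_UNIV[symmetric] del: UNIV_Times_UNIV)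

lemma mat_trace_mult_le: "mat_trace (mat_mult A B) \<le> frob_norm A * frob_norm B"
proof (rule power2_le_imp_le)
  have A: "(frob_norm A)\<^sup>2 = (\<Sum>z\<in>UNIV. (A (fst z) (snd z))\<^sup>2)"
    unfolding frob_norm_def sum_UNIV_pairs by (simp add: sum_nonneg)
  have "(frob_norm B)\<^sup>2 = (\<Sum>v\<in>UNIV. \<Sum>u\<in>UNIV. (B u v)\<^sup>2)"
    unfolding frob_norm_def by (simp add: sum_nonneg sum.swap[of "\<lambda>u v. (B u v)\<^sup>2"])
  also have "\<dots> = (\<Sum>z\<in>UNIV. (B (snd z) (fst z))\<^sup>2)"
    by (rule sum_UNIV_pairs)
  finally have B: "(frob_norm B)\<^sup>2 = (\<Sum>z\<in>UNIV. (B (snd z) (fst z))\<^sup>2)" .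
  have "(mat_trace (mat_mult A B))\<^sup>2 = (\<Sum>z\<in>UNIV. A (fst z) (snd z) * B (snd z) (fst z))\<^sup>2"
    unfolding mat_trace_def mat_mult_def sum_UNIV_pairs ..
  also have "\<dots> \<le> (frob_norm A)\<^sup>2 * (frob_norm B)\<^sup>2"
    unfolding A B by (rule Cauchy_Schwarz_ineq_sum)
  finally show "(mat_trace (mat_mult A B))\<^sup>2 \<le> (frob_norm A * frob_norm B)\<^sup>2"
    by (simp add: power_mult_distrib)
  show "0 \<le> frob_norm A * frob_norm B"
    by (simp add: frob_norm_nonneg)
qed

lemma frob_norm_mult_le: "frob_norm (mat_mult A B) \<le> frob_norm A * frob_norm B"
proof -
  have "(\<Sum>u\<in>UNIV. \<Sum>w\<in>UNIV. (mat_mult A B u w)\<^sup>2)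
      \<le> (\<Sum>u\<in>UNIV. \<Sum>w\<in>UNIV. (\<Sum>v\<in>UNIV. (A u v)\<^sup>2) * (\<Sum>v\<in>UNIV. (B v w)\<^sup>2))"
    unfolding mat_mult_def by (intro sum_mono Cauchy_Schwarz_ineq_sum)
  also have "\<dots> = (\<Sum>u\<in>UNIV. \<Sum>v\<in>UNIV. (A u v)\<^sup>2) * (\<Sum>u\<in>UNIV. \<Sum>v\<in>UNIV. (B u v)\<^sup>2)"
    by (simp add: sum_product[symmetric] sum.swap[of "\<lambda>w v. (B v w)\<^sup>2"])
  finally show ?thesis
    unfolding frob_norm_def by (simp add: real_sqrt_mult[symmetric])
qed

lemma sum_PiE_UNIV_insert:
  assumes "m \<notin> I"
  shows "(\<Sum>x\<in>PiE (insert m I) (\<lambda>_. UNIV::'x::finite set). f x) =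
         (\<Sum>v\<in>UNIV. \<Sum>g\<in>PiE I (\<lambda>_. UNIV). f (g(m := v)))"
proof -
  have "(\<Sum>x\<in>PiE (insert m I) (\<lambda>_. UNIV::'x set). f x) =
        (\<Sum>z\<in>UNIV \<times> PiE I (\<lambda>_. UNIV). f ((\<lambda>(y, g). g(m := y)) z))"
    unfolding PiE_insert_eq
    by (subst sum.reindex) (use inj_combinator[OF assms, of "\<lambda>_. UNIV::'x set"] in auto)
  also have "\<dots> = (\<Sum>v\<in>UNIV. \<Sum>g\<in>PiE I (\<lambda>_. UNIV). f (g(m := v)))"
    by (simp add: sum.cartesian_product split_def)
  finally show ?thesis .
qed

text \<open>For a permutation \<open>\<pi>\<close> of \<open>I\<close>, \<open>cycle_sum I \<pi> A\<close> is the product, over the cycles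
  of \<open>\<pi>\<close>, of the traces of the products of the matrices \<open>A i\<close> along each cycle.\<close>

definition cycle_sum :: "'i set \<Rightarrow> ('i \<Rightarrow> 'i) \<Rightarrow> ('i \<Rightarrow> 'x::finite \<Rightarrow> 'x \<Rightarrow> real) \<Rightarrow> real" where
  "cycle_sum I \<pi> A = (\<Sum>x\<in>PiE I (\<lambda>_. UNIV). \<Prod>i\<in>I. A i (x (\<pi> i)) (x i))"

lemma cycle_sum_empty [simp]: "cycle_sum {} \<pi> A = 1"
  by (simp add: cycle_sum_def PiE_empty_domain)

lemma cycle_sum_insert_fixpoint:
  fixes A :: "'i \<Rightarrow> 'x::finite \<Rightarrow> 'x \<Rightarrow> real"
  assumes I: "finite I" "m \<notin> I" and \<pi>: "\<pi> permutes I"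
  shows "cycle_sum (insert m I) \<pi> A = mat_trace (A m) * cycle_sum I \<pi> A"
proof -
  have \<pi>_m: "\<pi> m = m"
    using \<pi> I(2) by (simp add: permutes_not_in)
  have \<pi>_I: "\<pi> i \<in> I" if "i \<in> I" for i
    using \<pi> that by (simp add: permutes_in_image)
  have "cycle_sum (insert m I) \<pi> A
      = (\<Sum>v\<in>UNIV. \<Sum>g\<in>PiE I (\<lambda>_. UNIV). A m v v * (\<Prod>i\<in>I. A i (g (\<pi> i)) (g i)))"
    unfolding cycle_sum_def sum_PiE_UNIV_insert[OF I(2)]
  proof (intro sum.cong refl)
    fix v and g :: "'i \<Rightarrow> 'x"
    have "(\<Prod>i\<in>I. A i ((g(m := v)) (\<pi> i)) ((g(m := v)) i)) = (\<Prod>i\<in>I. A i (g (\<pi> i)) (g i))"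
      using \<pi>_I I(2) by (intro prod.cong) auto
    then show "(\<Prod>i\<in>insert m I. A i ((g(m := v)) (\<pi> i)) ((g(m := v)) i))
        = A m v v * (\<Prod>i\<in>I. A i (g (\<pi> i)) (g i))"
      using I \<pi>_m by simp
  qed
  then show ?thesis
    by (simp add: cycle_sum_def mat_trace_def sum_product)
qed

lemma prod_update_split:
  fixes A :: "'i \<Rightarrow> 'x::finite \<Rightarrow> 'x \<Rightarrow> real" and g :: "'i \<Rightarrow> 'x"
  assumes I: "finite I" "m \<notin> I" and \<pi>: "\<pi> permutes insert m I" and a: "a \<in> I" "\<pi> a = m"
  shows "(\<Prod>i\<in>insert m I. A i ((g(m := v)) (\<pi> i)) ((g(m := v)) i))
    = A m (g (\<pi> m)) v * A a v (g a) * (\<Prod>i\<in>I - {a}. A i (g (\<pi> i)) (g i))"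
proof -
  let ?F = "\<lambda>i. A i ((g(m := v)) (\<pi> i)) ((g(m := v)) i)"
  have am: "a \<noteq> m"
    using a I(2) by auto
  have "\<pi> m \<noteq> m"
    using a am permutes_inj[OF \<pi>] by (metis injD)
  have "prod ?F (insert m I) = ?F m * (?F a * prod ?F (I - {a}))"
    using I prod.remove[OF I(1) a(1), of ?F] by simp
  also have "?F m = A m (g (\<pi> m)) v"
    using \<open>\<pi> m \<noteq> m\<close> by simp
  also have "?F a = A a v (g a)"
    using a am by simp
  also have "prod ?F (I - {a}) = (\<Prod>i\<in>I - {a}. A i (g (\<pi> i)) (g i))"
  proof (rule prod.cong[OF refl])
    fix i assume "i \<in> I - {a}"
    then have "\<pi> i \<noteq> m" "i \<noteq> m"
      using a I(2) permutes_inj[OF \<pi>] by (auto dest: injD)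
    then show "?F i = A i (g (\<pi> i)) (g i)"
      by simp
  qed
  finally show ?thesis
    by (simp only: mult.assoc)
qed

text \<open>\<open>transpose m (\<pi> m) \<circ> \<pi>\<close> is \<open>\<pi>\<close> with \<open>m\<close> spliced out of its cycle.\<close>

lemma sum_prod_update_contract:
  fixes A :: "'i \<Rightarrow> 'x::finite \<Rightarrow> 'x \<Rightarrow> real" and g :: "'i \<Rightarrow> 'x"
  assumes I: "finite I" "m \<notin> I" and \<pi>: "\<pi> permutes insert m I" and a: "a \<in> I" "\<pi> a = m"
  shows "(\<Sum>v\<in>UNIV. \<Prod>i\<in>insert m I. A i ((g(m := v)) (\<pi> i)) ((g(m := v)) i))
    = (\<Prod>i\<in>I. (A(a := mat_mult (A m) (A a))) i (g ((transpose m (\<pi> m) \<circ> \<pi>) i)) (g i))"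
    (is "_ = (\<Prod>i\<in>I. ?A' i (g (?\<pi>' i)) (g i))")
proof -
  have "?\<pi>' i = \<pi> i" "?A' i = A i" if "i \<in> I - {a}" for i
  proof -
    have "\<pi> i \<noteq> m" "\<pi> i \<noteq> \<pi> m"
      using that a I(2) permutes_inj[OF \<pi>] by (auto dest: injD)
    then show "?\<pi>' i = \<pi> i" "?A' i = A i"
      using that by simp_all
  qed
  then have rest: "(\<Prod>i\<in>I - {a}. A i (g (\<pi> i)) (g i)) = (\<Prod>i\<in>I - {a}. ?A' i (g (?\<pi>' i)) (g i))"
    by (intro prod.cong) auto
  have "(\<Sum>v\<in>UNIV. \<Prod>i\<in>insert m I. A i ((g(m := v)) (\<pi> i)) ((g(m := v)) i))
      = mat_mult (A m) (A a) (g (\<pi> m)) (g a) * (\<Prod>i\<in>I - {a}. A i (g (\<pi> i)) (g i))"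
    unfolding prod_update_split[OF assms] by (simp add: mat_mult_def sum_distrib_right)
  also have "\<dots> = ?A' a (g (?\<pi>' a)) (g a) * (\<Prod>i\<in>I - {a}. ?A' i (g (?\<pi>' i)) (g i))"
    unfolding rest using a by simp
  also have "\<dots> = (\<Prod>i\<in>I. ?A' i (g (?\<pi>' i)) (g i))"
    by (rule prod.remove[OF I(1) a(1), symmetric])
  finally show ?thesis .
qed

lemma cycle_sum_insert_contract:
  fixes A :: "'i \<Rightarrow> 'x::finite \<Rightarrow> 'x \<Rightarrow> real"
  assumes "finite I" "m \<notin> I" "\<pi> permutes insert m I" "a \<in> I" "\<pi> a = m"
  shows "cycle_sum (insert m I) \<pi> A =
    cycle_sum I (transpose m (\<pi> m) \<circ> \<pi>) (A(a := mat_mult (A m) (A a)))"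
proof -
  have "cycle_sum (insert m I) \<pi> A = (\<Sum>g\<in>PiE I (\<lambda>_. UNIV). \<Sum>v\<in>UNIV.
      \<Prod>i\<in>insert m I. A i ((g(m := v)) (\<pi> i)) ((g(m := v)) i))"
    unfolding cycle_sum_def sum_PiE_UNIV_insert[OF assms(2)] by (rule sum.swap)
  also have "\<dots> = cycle_sum I (transpose m (\<pi> m) \<circ> \<pi>) (A(a := mat_mult (A m) (A a)))"
    unfolding cycle_sum_def using assms by (intro sum.cong refl sum_prod_update_contract)
  finally show ?thesis .
qed

definition cycle_weight :: "('i \<Rightarrow> 'i) \<Rightarrow> ('i \<Rightarrow> 'x::finite \<Rightarrow> 'x \<Rightarrow> real) \<Rightarrow> 'i \<Rightarrow> real" where
  "cycle_weight \<pi> A i = (if \<pi> i = i then mat_trace (A i) else frob_norm (A i))"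

lemma cycle_weight_nonneg: "(\<And>u v. 0 \<le> A i u v) \<Longrightarrow> 0 \<le> cycle_weight \<pi> A i"
  by (simp add: cycle_weight_def mat_trace_nonneg frob_norm_nonneg)

lemma prod_cycle_weight_contract_le:
  fixes A :: "'i \<Rightarrow> 'x::finite \<Rightarrow> 'x \<Rightarrow> real"
  assumes I: "finite I" "m \<notin> I" and \<pi>: "\<pi> permutes insert m I" and a: "a \<in> I" "\<pi> a = m"
    and A: "\<And>i u v. 0 \<le> A i u v"
  shows "(\<Prod>i\<in>I. cycle_weight (transpose m (\<pi> m) \<circ> \<pi>) (A(a := mat_mult (A m) (A a))) i)
    \<le> (\<Prod>i\<in>insert m I. cycle_weight \<pi> A i)"
proof -
  define \<pi>' where "\<pi>' = transpose m (\<pi> m) \<circ> \<pi>"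
  define A' where "A' = A(a := mat_mult (A m) (A a))"
  have am: "a \<noteq> m"
    using a I(2) by auto
  then have "\<pi> m \<noteq> m"
    using a permutes_inj[OF \<pi>] by (metis injD)
  then have w: "cycle_weight \<pi> A m = frob_norm (A m)" "cycle_weight \<pi> A a = frob_norm (A a)"
    using a am by (simp_all add: cycle_weight_def)
  have same: "(\<Prod>i\<in>I - {a}. cycle_weight \<pi>' A' i) = (\<Prod>i\<in>I - {a}. cycle_weight \<pi> A i)"
  proof (rule prod.cong[OF refl])
    fix i assume i: "i \<in> I - {a}"
    have "\<pi> i \<noteq> m" "\<pi> i \<noteq> \<pi> m"
      using i a I(2) permutes_inj[OF \<pi>] by (auto dest: injD)
    then show "cycle_weight \<pi>' A' i = cycle_weight \<pi> A i"
      using i by (simp add: cycle_weight_def \<pi>'_def A'_def)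
  qed
  have "(\<Prod>i\<in>I. cycle_weight \<pi>' A' i) = cycle_weight \<pi>' A' a * (\<Prod>i\<in>I - {a}. cycle_weight \<pi> A i)"
    unfolding prod.remove[OF I(1) a(1), of "cycle_weight \<pi>' A'"] same ..
  also have "\<dots> \<le> (frob_norm (A m) * frob_norm (A a)) * (\<Prod>i\<in>I - {a}. cycle_weight \<pi> A i)"
    by (intro mult_right_mono prod_nonneg cycle_weight_nonneg A)
      (simp add: cycle_weight_def A'_def mat_trace_mult_le frob_norm_mult_le)
  also have "\<dots> = (\<Prod>i\<in>insert m I. cycle_weight \<pi> A i)"
    using I prod.remove[OF I(1) a(1), of "cycle_weight \<pi> A"] by (simp add: w)
  finally show ?thesis
    unfolding \<pi>'_def A'_def .
qed

lemma cycle_sum_le: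
  assumes "finite I" "\<pi> permutes I" "\<And>i u v. 0 \<le> A i u v"
  shows "cycle_sum I \<pi> A \<le> (\<Prod>i\<in>I. cycle_weight \<pi> A i)"
  using assms
proof (induction I arbitrary: \<pi> A rule: finite_induct)
  case empty
  then show ?case by simp
next
  case (insert m I)
  show ?case
  proof (cases "\<pi> m = m")
    case True
    have \<pi>: "\<pi> permutes I"
      using permutes_insert_lemma[OF insert.prems(1)] True by simp
    have "cycle_sum (insert m I) \<pi> A = mat_trace (A m) * cycle_sum I \<pi> A"
      using insert.hyps \<pi> by (rule cycle_sum_insert_fixpoint)
    also have "\<dots> \<le> mat_trace (A m) * (\<Prod>i\<in>I. cycle_weight \<pi> A i)"
      using insert.IH[OF \<pi> insert.prems(2)] insert.prems(2)
      by (intro mult_left_mono mat_trace_nonneg) auto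
    also have "\<dots> = (\<Prod>i\<in>insert m I. cycle_weight \<pi> A i)"
      using insert.hyps True by (simp add: cycle_weight_def)
    finally show ?thesis .
  next
    case False
    obtain a where a: "\<pi> a = m"
      using permutes_surj[OF insert.prems(1)] by (metis surjD)
    then have aI: "a \<in> I"
      using False insert.prems(1) by (metis insertE permutes_not_in)
    have "cycle_sum (insert m I) \<pi> A
        = cycle_sum I (transpose m (\<pi> m) \<circ> \<pi>) (A(a := mat_mult (A m) (A a)))"
      using insert.hyps insert.prems(1) aI a by (rule cycle_sum_insert_contract)
    also have "\<dots> \<le> (\<Prod>i\<in>I. cycle_weight (transpose m (\<pi> m) \<circ> \<pi>) (A(a := mat_mult (A m) (A a))) i)"
      using insert.prems by (intro insert.IH permutes_insert_lemma)
        (auto simp: mat_mult_def sum_nonneg)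
    also have "\<dots> \<le> (\<Prod>i\<in>insert m I. cycle_weight \<pi> A i)"
      using insert.hyps insert.prems(1) aI a insert.prems(2) by (rule prod_cycle_weight_contract_le)
    finally show ?thesis .
  qed
qed

section \<open>Permutations of blocks\<close>

definition num_moved :: "nat \<Rightarrow> (nat \<Rightarrow> nat) \<Rightarrow> nat" where
  "num_moved M \<sigma> = card {i\<in>{..<M}. \<sigma> i \<noteq> i}"

definition block_perm :: "nat \<Rightarrow> nat \<Rightarrow> (nat \<Rightarrow> nat) \<Rightarrow> nat \<Rightarrow> nat" where
  "block_perm M L \<sigma> k = (if k < M * L then \<sigma> (k div L) * L + k mod L else k)"

lemma mult_add_less_mult:
  fixes q r M L :: nat
  assumes "q < M" "r < L"
  shows "q * L + r < M * L"
proof -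
  have "q * L + r < (q + 1) * L"
    using assms(2) by simp
  also have "\<dots> \<le> M * L"
    using assms(1) by (intro mult_right_mono) auto
  finally show ?thesis .
qed

lemma mult_add_eq_mult_add_iff:
  fixes q q' r r' L :: nat
  assumes "r < L" "r' < L"
  shows "q * L + r = q' * L + r' \<longleftrightarrow> q = q' \<and> r = r'"
  by (metis assms add.commute div_mult_self1 div_less add_0 mod_mult_self1 mod_less
      less_nat_zero_code)

lemma block_perm_permutes:
  assumes \<sigma>: "\<sigma> permutes {..<M}"
  shows "block_perm M L \<sigma> permutes {..<M * L}"
proof (rule bij_imp_permutes)
  let ?f = "block_perm M L \<sigma>"
  have L: "0 < L" if "k < M * L" for k
    using that by (cases L) auto
  have div: "k div L < M" if "k < M * L" for k
    using that L[OF that] by (simp add: div_less_iff_less_mult)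
  have "?f ` {..<M * L} \<subseteq> {..<M * L}"
  proof
    fix y assume "y \<in> ?f ` {..<M * L}"
    then obtain k where k: "k < M * L" "y = ?f k" by auto
    have "\<sigma> (k div L) < M"
      using div[OF k(1)] \<sigma> by (metis lessThan_iff permutes_in_image)
    then show "y \<in> {..<M * L}"
      using k L by (simp add: block_perm_def mult_add_less_mult)
  qed
  moreover have "inj_on ?f {..<M * L}"
  proof (rule inj_onI)
    fix k k' assume k: "k \<in> {..<M * L}" "k' \<in> {..<M * L}" and "?f k = ?f k'"
    then have "\<sigma> (k div L) = \<sigma> (k' div L)" "k mod L = k' mod L"
      using L by (auto simp: block_perm_def mult_add_eq_mult_add_iff)
    then show "k = k'"
      using permutes_inj[OF \<sigma>] by (metis injD div_mult_mod_eq)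
  qed
  ultimately show "bij_betw ?f {..<M * L} {..<M * L}"
    by (simp add: bij_betw_def endo_inj_surj)
  show "?f x = x" if "x \<notin> {..<M * L}" for x
    using that by (simp add: block_perm_def)
qed

lemma rearr_eq_block_perm: "k < M * L \<Longrightarrow> rearr M L \<sigma> xs k = xs (block_perm M L \<sigma> k)"
  by (simp add: rearr_def block_perm_def)

lemma rearr_fixed_block:
  assumes "i < M" "j < L" "\<sigma> i = i"
  shows "rearr M L \<sigma> xs (i * L + j) = xs (i * L + j)"
  using assms by (simp add: rearr_def mult_add_less_mult)

lemma mult_num_moved_le_card_moved_block_perm:
  "L * num_moved M \<sigma> \<le> card {k\<in>{..<M * L}. block_perm M L \<sigma> k \<noteq> k}"
proof -
  let ?D = "{i\<in>{..<M}. \<sigma> i \<noteq> i} \<times> {..<L}"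
  have "card ?D \<le> card {k\<in>{..<M * L}. block_perm M L \<sigma> k \<noteq> k}"
  proof (rule card_inj_on_le)
    show "inj_on (\<lambda>(q, r). q * L + r) ?D"
      by (rule inj_onI) (auto simp: mult_add_eq_mult_add_iff)
    show "(\<lambda>(q, r). q * L + r) ` ?D \<subseteq> {k\<in>{..<M * L}. block_perm M L \<sigma> k \<noteq> k}"
      by (auto simp: block_perm_def mult_add_less_mult mult_add_eq_mult_add_iff)
  qed simp
  then show ?thesis
    by (simp add: num_moved_def card_cartesian_product mult.commute)
qed

lemma num_moved_le: "num_moved M \<sigma> \<le> M"
  using card_mono[of "{..<M}" "{i\<in>{..<M}. \<sigma> i \<noteq> i}"] by (auto simp: num_moved_def)

lemma two_le_num_moved:
  assumes \<sigma>: "\<sigma> permutes {..<M}" and i: "i < M" "\<sigma> i \<noteq> i"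
  shows "2 \<le> num_moved M \<sigma>"
proof -
  have "\<sigma> (\<sigma> i) \<noteq> \<sigma> i"
    using i permutes_inj[OF \<sigma>] by (metis injD)
  then have "{i, \<sigma> i} \<subseteq> {i\<in>{..<M}. \<sigma> i \<noteq> i}"
    using i permutes_in_image[OF \<sigma>, of i] by auto
  then have "card {i, \<sigma> i} \<le> num_moved M \<sigma>"
    unfolding num_moved_def by (intro card_mono) auto
  then show ?thesis
    using i by simp
qed

lemma two_le_num_moved_if_rearr_ne:
  assumes \<sigma>: "\<sigma> permutes {..<M}" and ne: "\<exists>k<M * L. rearr M L \<sigma> xs k \<noteq> xs k"
  shows "2 \<le> num_moved M \<sigma>"
proof -
  obtain k where k: "k < M * L" "rearr M L \<sigma> xs k \<noteq> xs k"
    using ne by blast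
  have L: "0 < L"
    using k by (cases L) auto
  then have kd: "k div L < M"
    using k by (simp add: div_less_iff_less_mult)
  have "\<sigma> (k div L) \<noteq> k div L"
  proof
    assume "\<sigma> (k div L) = k div L"
    then have "rearr M L \<sigma> xs (k div L * L + k mod L) = xs (k div L * L + k mod L)"
      using kd L by (intro rearr_fixed_block) auto
    then show False
      using k by simp
  qed
  then show ?thesis
    using two_le_num_moved[OF \<sigma> kd] by simp
qed

lemma Xi_rearr_le_num_moved:
  assumes "0 < M"
  shows "Xi M L xs (rearr M L \<sigma> xs) * real M \<le> real (num_moved M \<sigma>)"
proof -
  let ?D = "{i\<in>{..<M}. \<exists>j<L. rearr M L \<sigma> xs (i * L + j) \<noteq> xs (i * L + j)}"
  have "Xi M L xs (rearr M L \<sigma> xs) * real M = real (card ?D)"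
    using assms unfolding Xi_def by (simp add: sum.inter_filter[symmetric])
  also have "?D \<subseteq> {i\<in>{..<M}. \<sigma> i \<noteq> i}"
    using rearr_fixed_block by blast
  then have "card ?D \<le> num_moved M \<sigma>"
    unfolding num_moved_def by (intro card_mono) auto
  finally show ?thesis by simp
qed

lemma card_perms_num_moved_le: "card {\<sigma>. \<sigma> permutes {..<M} \<and> num_moved M \<sigma> = k} \<le> M ^ k"
proof -
  let ?T = "{T. T \<subseteq> {..<M} \<and> card T = k}"
  have "{\<sigma>. \<sigma> permutes {..<M} \<and> num_moved M \<sigma> = k} \<subseteq> (\<Union>T\<in>?T. {\<sigma>. \<sigma> permutes T})"
  proof
    fix \<sigma> assume "\<sigma> \<in> {\<sigma>. \<sigma> permutes {..<M} \<and> num_moved M \<sigma> = k}"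
    then have "\<sigma> permutes {i\<in>{..<M}. \<sigma> i \<noteq> i}" "{i\<in>{..<M}. \<sigma> i \<noteq> i} \<in> ?T"
      by (auto simp: permutes_def num_moved_def)
    then show "\<sigma> \<in> (\<Union>T\<in>?T. {\<sigma>. \<sigma> permutes T})" by blast
  qed
  moreover have "finite (\<Union>T\<in>?T. {\<sigma>. \<sigma> permutes T})"
    by (rule finite_subset[OF _ finite_permutations[of "{..<M}"]]) (auto intro: permutes_subset)
  ultimately have "card {\<sigma>. \<sigma> permutes {..<M} \<and> num_moved M \<sigma> = k}
      \<le> card (\<Union>T\<in>?T. {\<sigma>. \<sigma> permutes T})"
    by (rule card_mono[rotated])
  also have "\<dots> \<le> (\<Sum>T\<in>?T. card {\<sigma>. \<sigma> permutes T})"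
    by (rule card_UN_le) simp
  also have "\<dots> = (\<Sum>T\<in>?T. fact k)"
    by (intro sum.cong refl) (auto simp: card_permutations finite_subset)
  also have "\<dots> = (M choose k) * fact k"
    using n_subsets[of "{..<M}" k] by simp
  also have "\<dots> \<le> M ^ k"
    by (rule binomial_fact_pow)
  finally show ?thesis .
qed

lemma sum_power_num_moved_le:
  fixes x :: real
  assumes "0 \<le> x"
  shows "(\<Sum>\<sigma>\<in>{\<sigma>. \<sigma> permutes {..<M} \<and> K \<le> num_moved M \<sigma>}. x ^ num_moved M \<sigma>)
     \<le> (\<Sum>k\<in>{K..M}. (real M * x) ^ k)"
proof -
  let ?S = "{\<sigma>. \<sigma> permutes {..<M} \<and> K \<le> num_moved M \<sigma>}"
  have "finite ?S"
    by (rule finite_subset[OF _ finite_permutations[of "{..<M}"]]) auto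
  moreover have "num_moved M ` ?S \<subseteq> {K..M}"
    using num_moved_le by auto
  ultimately have "(\<Sum>\<sigma>\<in>?S. x ^ num_moved M \<sigma>)
      = (\<Sum>k\<in>{K..M}. \<Sum>\<sigma>\<in>{\<sigma>\<in>?S. num_moved M \<sigma> = k}. x ^ num_moved M \<sigma>)"
    using sum.group[of ?S "{K..M}" "num_moved M" "\<lambda>\<sigma>. x ^ num_moved M \<sigma>"] by simp
  also have "\<dots> \<le> (\<Sum>k\<in>{K..M}. (real M * x) ^ k)"
  proof (rule sum_mono)
    fix k assume k: "k \<in> {K..M}"
    then have "{\<sigma>\<in>?S. num_moved M \<sigma> = k} = {\<sigma>. \<sigma> permutes {..<M} \<and> num_moved M \<sigma> = k}"
      by auto
    then have "(\<Sum>\<sigma>\<in>{\<sigma>\<in>?S. num_moved M \<sigma> = k}. x ^ num_moved M \<sigma>)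
        = real (card {\<sigma>. \<sigma> permutes {..<M} \<and> num_moved M \<sigma> = k}) * x ^ k"
      by simp
    also have "\<dots> \<le> real (M ^ k) * x ^ k"
      using card_perms_num_moved_le[of M k] assms by (intro mult_right_mono) auto
    finally show "(\<Sum>\<sigma>\<in>{\<sigma>\<in>?S. num_moved M \<sigma> = k}. x ^ num_moved M \<sigma>) \<le> (real M * x) ^ k"
      by (simp add: power_mult_distrib)
  qed
  finally show ?thesis .
qed

section \<open>Pairwise error probabilities\<close>

lemma real_sqrt_prod: "sqrt (prod f A) = (\<Prod>x\<in>A. sqrt (f x))"
  by (induct A rule: infinite_finite_induct) (auto simp: real_sqrt_mult)

lemma is_ML_imp_rearr:
  assumes "is_ML p M L xs ys xhat"
  obtains \<sigma> where "\<sigma> permutes {..<M}" "xhat = rearr M L \<sigma> xs"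
    and "likelihood p (M * L) xs ys \<le> likelihood p (M * L) xhat ys"
proof -
  have "rearr M L id xs \<in> recon_set M L xs"
    unfolding recon_set_def using permutes_id by blast
  then have "likelihood p (M * L) (rearr M L id xs) ys \<le> likelihood p (M * L) xhat ys"
    using assms unfolding is_ML_def by blast
  moreover have "likelihood p (M * L) (rearr M L id xs) ys = likelihood p (M * L) xs ys"
    unfolding likelihood_def by (intro prod.cong refl) (simp add: rearr_def)
  moreover obtain \<sigma> where "\<sigma> permutes {..<M}" "xhat = rearr M L \<sigma> xs"
    using assms unfolding is_ML_def recon_set_def by blast
  ultimately show ?thesis
    using that by simp
qed

lemma prob_iid_le_sum:
  fixes p :: "'x::finite \<Rightarrow> 'y::finite \<Rightarrow> real"
  assumes "finite S" "\<And>x y. 0 \<le> p x y"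
    and "\<And>xs ys. xs \<in> seqs N \<Longrightarrow> ys \<in> seqs N \<Longrightarrow> E xs ys \<Longrightarrow> \<exists>\<sigma>\<in>S. F \<sigma> xs ys"
  shows "prob_iid p N E \<le> (\<Sum>\<sigma>\<in>S. prob_iid p N (F \<sigma>))"
proof -
  let ?w = "\<lambda>xs ys. \<Prod>k<N. p (xs k) (ys k)"
  have w: "0 \<le> ?w xs ys" for xs ys
    using assms(2) by (simp add: prod_nonneg)
  have "prob_iid p N E \<le> (\<Sum>xs\<in>seqs N. \<Sum>ys\<in>seqs N. \<Sum>\<sigma>\<in>S. if F \<sigma> xs ys then ?w xs ys else 0)"
    unfolding prob_iid_def
  proof (intro sum_mono)
    fix xs :: "nat \<Rightarrow> 'x" and ys :: "nat \<Rightarrow> 'y" assume xy: "xs \<in> seqs N" "ys \<in> seqs N"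
    show "(if E xs ys then ?w xs ys else 0) \<le> (\<Sum>\<sigma>\<in>S. if F \<sigma> xs ys then ?w xs ys else 0)"
    proof (cases "E xs ys")
      case True
      then obtain \<sigma> where "\<sigma> \<in> S" "F \<sigma> xs ys"
        using assms(3) xy by blast
      then show ?thesis
        using True w assms(1) member_le_sum[of \<sigma> S "\<lambda>\<sigma>. if F \<sigma> xs ys then ?w xs ys else 0"]
        by simp
    qed (simp add: w sum_nonneg)
  qed
  also have "\<dots> = (\<Sum>\<sigma>\<in>S. prob_iid p N (F \<sigma>))"
    unfolding prob_iid_def by (simp add: sum.swap[of _ S])
  finally show ?thesis .
qed

locale joint_pmf =
  fixes p :: "'x::finite \<Rightarrow> 'y::finite \<Rightarrow> real"
  assumes pmf: "is_joint_pmf p"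
    and full_support: "\<forall>x. PX p x > 0"
begin

lemma p_nonneg: "0 \<le> p x y"
  using pmf by (simp add: is_joint_pmf_def)

lemma PX_pos: "0 < PX p x"
  using full_support by simp

lemma sum_PX: "(\<Sum>x\<in>UNIV. PX p x) = 1"
  using pmf by (simp add: is_joint_pmf_def PX_def)

lemma p_eq_PX_chan: "p x y = PX p x * chan p x y"
  using PX_pos[of x] by (simp add: chan_def)

lemma chan_nonneg: "0 \<le> chan p x y"
  using PX_pos[of x] p_nonneg[of x y] by (simp add: chan_def)

lemma sum_chan: "(\<Sum>y\<in>UNIV. chan p x y) = 1"
  using PX_pos[of x] by (simp add: chan_def PX_def sum_divide_distrib[symmetric])

lemma bhat_coeff_nonneg: "0 \<le> bhat_coeff p u v"
  unfolding bhat_coeff_def by (intro sum_nonneg real_sqrt_ge_zero mult_nonneg_nonneg chan_nonneg)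

lemma bhat_coeff_same: "bhat_coeff p u u = 1"
  using sum_chan[of u] chan_nonneg by (simp add: bhat_coeff_def)

definition bhat_partition :: real where
  "bhat_partition = (\<Sum>u\<in>UNIV. \<Sum>v\<in>UNIV. PX p u * PX p v * (bhat_coeff p u v)\<^sup>2)"

lemma bhat_partition_pos: "0 < bhat_partition"
proof -
  fix u :: 'x
  have "0 < PX p u * PX p u * (bhat_coeff p u u)\<^sup>2"
    using PX_pos[of u] by (simp add: bhat_coeff_same)
  also have "\<dots> \<le> (\<Sum>v\<in>UNIV. PX p u * PX p v * (bhat_coeff p u v)\<^sup>2)"
    by (rule member_le_sum) (auto intro!: mult_nonneg_nonneg less_imp_le[OF PX_pos])
  also have "\<dots> \<le> bhat_partition"
    unfolding bhat_partition_def
    by (rule member_le_sum) (auto intro!: sum_nonneg mult_nonneg_nonneg less_imp_le[OF PX_pos])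
  finally show ?thesis .
qed

lemma bhat_partition_nonneg [simp]: "0 \<le> bhat_partition"
  using bhat_partition_pos by simp

definition bhat_tilted :: "'x \<times> 'x \<Rightarrow> real" where
  "bhat_tilted z = PX p (fst z) * PX p (snd z) * (bhat_coeff p (fst z) (snd z))\<^sup>2 / bhat_partition"

lemma bhat_tilted_simplex2: "bhat_tilted \<in> simplex2"
proof -
  have "(\<Sum>z\<in>UNIV. bhat_tilted z) = bhat_partition / bhat_partition"
    unfolding bhat_tilted_def bhat_partition_def sum_UNIV_pairs sum_divide_distrib ..
  then show ?thesis
    using bhat_partition_pos
    by (auto simp: simplex2_def bhat_tilted_def intro!: divide_nonneg_pos mult_nonneg_nonneg
        less_imp_le[OF PX_pos])
qed

lemma bhat_tilted_eq_0_iff: "bhat_tilted z = 0 \<longleftrightarrow> bhat_coeff p (fst z) (snd z) = 0"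
  using bhat_partition_pos PX_pos[of "fst z"] PX_pos[of "snd z"] by (simp add: bhat_tilted_def)

text \<open>The tilted distribution attains \<open>-ln bhat_partition / 2\<close> in the variational formula for
  \<open>psi2\<close>; by the Gibbs variational principle it is in fact the minimiser.\<close>

lemma psi2_le_bhat_partition: "psi2 p \<le> ereal (- ln bhat_partition / 2)"
proof -
  let ?Q = bhat_tilted
  define g where "g z = (if bhat_coeff p (fst z) (snd z) = 0 then 0
    else ?Q z * (- ln (bhat_coeff p (fst z) (snd z))))" for z
  have dist: "bhat_dist_joint p ?Q = ereal (\<Sum>z\<in>UNIV. g z)"
    unfolding bhat_dist_joint_def sum_ereal[symmetric]
    by (intro sum.cong refl) (auto simp: g_def bhat_dist_def bhat_tilted_eq_0_iff)
  have summand: "(if ?Q z = 0 then 0 else ?Q z * ln (?Q z / (PX p (fst z) * PX p (snd z)))) / 2 + g z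
      = - ?Q z * ln bhat_partition / 2" for z
  proof (cases "bhat_coeff p (fst z) (snd z) = 0")
    case True
    then show ?thesis by (simp add: bhat_tilted_eq_0_iff g_def bhat_tilted_def)
  next
    case False
    let ?b = "bhat_coeff p (fst z) (snd z)"
    have "0 < ?b"
      using False bhat_coeff_nonneg by (simp add: order_less_le)
    moreover have "?Q z / (PX p (fst z) * PX p (snd z)) = ?b\<^sup>2 / bhat_partition"
      using PX_pos[of "fst z"] PX_pos[of "snd z"] by (simp add: bhat_tilted_def)
    ultimately have "ln (?Q z / (PX p (fst z) * PX p (snd z))) = 2 * ln ?b - ln bhat_partition"
      using bhat_partition_pos by (simp add: ln_div ln_mult power2_eq_square)
    moreover have "?Q z \<noteq> 0"
      using False bhat_tilted_eq_0_iff by simp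
    ultimately show ?thesis
      using False unfolding g_def by (simp only: if_False) (simp add: field_simps)
  qed
  have "KL2 ?Q (PX p) / 2 + (\<Sum>z\<in>UNIV. g z) = (\<Sum>z\<in>UNIV. - ?Q z * ln bhat_partition / 2)"
    unfolding KL2_def sum_divide_distrib sum.distrib[symmetric] summand ..
  also have "\<dots> = - ln bhat_partition / 2 * (\<Sum>z\<in>UNIV. ?Q z)"
    by (simp add: sum_distrib_left sum_divide_distrib sum_negf algebra_simps)
  also have "\<dots> = - ln bhat_partition / 2"
    using bhat_tilted_simplex2 by (simp add: simplex2_def)
  finally have "ereal (KL2 ?Q (PX p) / 2) + bhat_dist_joint p ?Q = ereal (- ln bhat_partition / 2)"
    unfolding dist by simp
  moreover have "psi2 p \<le> ereal (KL2 ?Q (PX p) / 2) + bhat_dist_joint p ?Q"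
    unfolding psi2_def by (rule INF_lower[OF bhat_tilted_simplex2])
  ultimately show ?thesis by simp
qed

definition bhat_matrix :: "'x \<Rightarrow> 'x \<Rightarrow> real" where
  "bhat_matrix u v = sqrt (PX p u) * bhat_coeff p u v * sqrt (PX p v)"

lemma bhat_matrix_nonneg: "0 \<le> bhat_matrix u v"
  unfolding bhat_matrix_def using PX_pos bhat_coeff_nonneg by (simp add: less_imp_le)

lemma mat_trace_bhat_matrix: "mat_trace bhat_matrix = 1"
  unfolding mat_trace_def bhat_matrix_def using sum_PX
  by (simp add: bhat_coeff_same abs_of_pos[OF PX_pos])

lemma frob_norm_bhat_matrix: "frob_norm bhat_matrix = sqrt bhat_partition"
proof -
  have "(bhat_matrix u v)\<^sup>2 = PX p u * PX p v * (bhat_coeff p u v)\<^sup>2" for u v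
    using PX_pos[of u] PX_pos[of v] by (simp add: bhat_matrix_def power_mult_distrib less_imp_le)
  then show ?thesis
    unfolding frob_norm_def bhat_partition_def by simp
qed

lemma prob_likelihood_le_bhat_coeff:
  "prob_iid p N (\<lambda>xs ys. likelihood p N xs ys \<le> likelihood p N (f xs) ys)
     \<le> (\<Sum>xs\<in>seqs N. (\<Prod>k<N. PX p (xs k)) * (\<Prod>k<N. bhat_coeff p (f xs k) (xs k)))"
proof -
  have "prob_iid p N (\<lambda>xs ys. likelihood p N xs ys \<le> likelihood p N (f xs) ys)
      \<le> (\<Sum>xs\<in>seqs N. \<Sum>ys\<in>seqs N.
          (\<Prod>k<N. PX p (xs k)) * sqrt (likelihood p N (f xs) ys * likelihood p N xs ys))"
    unfolding prob_iid_def
  proof (intro sum_mono)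
    fix xs ys
    let ?a = "likelihood p N xs ys" and ?b = "likelihood p N (f xs) ys"
    have ab: "0 \<le> ?a" "0 \<le> ?b"
      by (simp_all add: likelihood_def prod_nonneg chan_nonneg)
    have "?a \<le> sqrt (?b * ?a)" if "?a \<le> ?b"
      using that ab by (intro real_le_rsqrt) (simp add: power2_eq_square mult_right_mono)
    moreover have "(\<Prod>k<N. p (xs k) (ys k)) = (\<Prod>k<N. PX p (xs k)) * ?a"
      by (simp add: likelihood_def p_eq_PX_chan prod.distrib)
    moreover have "0 \<le> (\<Prod>k<N. PX p (xs k))"
      by (simp add: prod_nonneg less_imp_le[OF PX_pos])
    ultimately show "(if ?a \<le> ?b then \<Prod>k<N. p (xs k) (ys k) else 0)
        \<le> (\<Prod>k<N. PX p (xs k)) * sqrt (?b * ?a)"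
      using ab by (auto intro: mult_left_mono)
  qed
  also have "\<dots> = (\<Sum>xs\<in>seqs N. (\<Prod>k<N. PX p (xs k)) * (\<Prod>k<N. bhat_coeff p (f xs k) (xs k)))"
  proof (intro sum.cong refl)
    fix xs
    have "(\<Sum>ys\<in>seqs N. sqrt (likelihood p N (f xs) ys * likelihood p N xs ys))
        = (\<Sum>ys\<in>seqs N. \<Prod>k<N. sqrt (chan p (f xs k) (ys k) * chan p (xs k) (ys k)))"
      by (simp add: likelihood_def prod.distrib[symmetric] real_sqrt_prod)
    also have "\<dots> = (\<Prod>k<N. bhat_coeff p (f xs k) (xs k))"
      unfolding seqs_def bhat_coeff_def by (rule prod_sum_PiE[symmetric]) auto
    finally show "(\<Sum>ys\<in>seqs N.
          (\<Prod>k<N. PX p (xs k)) * sqrt (likelihood p N (f xs) ys * likelihood p N xs ys))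
        = (\<Prod>k<N. PX p (xs k)) * (\<Prod>k<N. bhat_coeff p (f xs k) (xs k))"
      by (simp add: sum_distrib_left[symmetric])
  qed
  finally show ?thesis .
qed

lemma prod_bhat_matrix:
  assumes \<pi>: "\<pi> permutes {..<N}"
  shows "(\<Prod>k<N. bhat_matrix (xs (\<pi> k)) (xs k))
    = (\<Prod>k<N. PX p (xs k)) * (\<Prod>k<N. bhat_coeff p (xs (\<pi> k)) (xs k))"
proof -
  have "(\<Prod>k<N. bhat_matrix (xs (\<pi> k)) (xs k)) = (\<Prod>k<N. sqrt (PX p (xs (\<pi> k))))
      * (\<Prod>k<N. bhat_coeff p (xs (\<pi> k)) (xs k)) * (\<Prod>k<N. sqrt (PX p (xs k)))"
    unfolding bhat_matrix_def by (simp add: prod.distrib)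
  also have "(\<Prod>k<N. sqrt (PX p (xs (\<pi> k)))) = (\<Prod>k<N. sqrt (PX p (xs k)))"
    using prod.permute[OF \<pi>, of "\<lambda>k. sqrt (PX p (xs k))"] by (simp add: comp_def)
  also have "(\<Prod>k<N. sqrt (PX p (xs k))) * (\<Prod>k<N. bhat_coeff p (xs (\<pi> k)) (xs k))
      * (\<Prod>k<N. sqrt (PX p (xs k)))
      = (\<Prod>k<N. sqrt (PX p (xs k)) * sqrt (PX p (xs k))) * (\<Prod>k<N. bhat_coeff p (xs (\<pi> k)) (xs k))"
    by (simp only: prod.distrib mult_ac)
  finally show ?thesis
    using PX_pos by (simp add: less_imp_le)
qed

lemma prob_likelihood_perm_le:
  assumes \<pi>: "\<pi> permutes {..<N}"
  shows "prob_iid p N (\<lambda>xs ys. likelihood p N xs ys \<le> likelihood p N (xs \<circ> \<pi>) ys)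
    \<le> sqrt bhat_partition ^ card {k\<in>{..<N}. \<pi> k \<noteq> k}"
proof -
  have "prob_iid p N (\<lambda>xs ys. likelihood p N xs ys \<le> likelihood p N (xs \<circ> \<pi>) ys)
      \<le> (\<Sum>xs\<in>seqs N. \<Prod>k<N. bhat_matrix (xs (\<pi> k)) (xs k))"
    using prob_likelihood_le_bhat_coeff[of N "\<lambda>xs. xs \<circ> \<pi>"] by (simp add: prod_bhat_matrix[OF \<pi>])
  also have "\<dots> = cycle_sum {..<N} \<pi> (\<lambda>_. bhat_matrix)"
    by (simp add: cycle_sum_def seqs_def)
  also have "\<dots> \<le> (\<Prod>k<N. if \<pi> k = k then 1 else sqrt bhat_partition)"
    using cycle_sum_le[OF finite_lessThan \<pi>, of "\<lambda>_. bhat_matrix"] bhat_matrix_nonneg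
    unfolding cycle_weight_def mat_trace_bhat_matrix frob_norm_bhat_matrix by blast
  also have "\<dots> = sqrt bhat_partition ^ card {k\<in>{..<N}. \<pi> k \<noteq> k}"
    by (simp add: prod.If_cases Compl_eq Int_def)
  finally show ?thesis .
qed

lemma prob_likelihood_rearr_le:
  assumes \<sigma>: "\<sigma> permutes {..<M}" and le1: "sqrt bhat_partition \<le> 1"
  shows "prob_iid p (M * L)
      (\<lambda>xs ys. likelihood p (M * L) xs ys \<le> likelihood p (M * L) (rearr M L \<sigma> xs) ys)
    \<le> (sqrt bhat_partition ^ L) ^ num_moved M \<sigma>"
proof -
  have "likelihood p (M * L) (rearr M L \<sigma> xs) ys
      = likelihood p (M * L) (xs \<circ> block_perm M L \<sigma>) ys" for xs :: "nat \<Rightarrow> 'x" and ys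
    unfolding likelihood_def by (intro prod.cong refl) (simp add: rearr_eq_block_perm)
  then have "prob_iid p (M * L)
      (\<lambda>xs ys. likelihood p (M * L) xs ys \<le> likelihood p (M * L) (rearr M L \<sigma> xs) ys)
    = prob_iid p (M * L)
      (\<lambda>xs ys. likelihood p (M * L) xs ys \<le> likelihood p (M * L) (xs \<circ> block_perm M L \<sigma>) ys)"
    by simp
  also have "\<dots> \<le> sqrt bhat_partition ^ card {k\<in>{..<M * L}. block_perm M L \<sigma> k \<noteq> k}"
    by (rule prob_likelihood_perm_le[OF block_perm_permutes[OF \<sigma>]])
  also have "\<dots> \<le> sqrt bhat_partition ^ (L * num_moved M \<sigma>)"
    using le1 by (intro power_decreasing mult_num_moved_le_card_moved_block_perm) auto
  finally show ?thesis
    by (simp add: power_mult)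
qed

lemma FP_le_sum_powers:
  fixes \<beta> :: real and M :: nat and dec :: "nat \<Rightarrow> (nat \<Rightarrow> 'x) \<Rightarrow> (nat \<Rightarrow> 'y) \<Rightarrow> (nat \<Rightarrow> 'x)"
  defines "L \<equiv> frag_len \<beta> M"
  assumes ml: "\<And>xs ys. xs \<in> seqs (M * L) \<Longrightarrow> ys \<in> seqs (M * L) \<Longrightarrow> is_ML p M L xs ys (dec M xs ys)"
    and le1: "sqrt bhat_partition \<le> 1"
    and K: "\<And>\<sigma> (xs :: nat \<Rightarrow> 'x). \<sigma> permutes {..<M} \<Longrightarrow> \<xi> \<le> Xi M L xs (rearr M L \<sigma> xs) \<Longrightarrow>
      (\<exists>k<M * L. rearr M L \<sigma> xs k \<noteq> xs k) \<Longrightarrow> K \<le> num_moved M \<sigma>"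
  shows "FP p \<beta> dec M \<xi> \<le> (\<Sum>k\<in>{K..M}. (real M * sqrt bhat_partition ^ L) ^ k)"
proof -
  define S where "S = {\<sigma>. \<sigma> permutes {..<M} \<and> K \<le> num_moved M \<sigma>}"
  have "FP p \<beta> dec M \<xi> = prob_iid p (M * L)
      (\<lambda>xs ys. \<xi> \<le> Xi M L xs (dec M xs ys) \<and> (\<exists>k<M * L. dec M xs ys k \<noteq> xs k))"
    unfolding FP_def L_def Let_def ..
  also have "\<dots> \<le> (\<Sum>\<sigma>\<in>S. prob_iid p (M * L)
      (\<lambda>xs ys. likelihood p (M * L) xs ys \<le> likelihood p (M * L) (rearr M L \<sigma> xs) ys))"
  proof (rule prob_iid_le_sum)
    show "finite S"
      unfolding S_def by (rule finite_subset[OF _ finite_permutations[of "{..<M}"]]) auto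
    fix xs ys
    assume "xs \<in> seqs (M * L)" "ys \<in> seqs (M * L)"
      and E: "\<xi> \<le> Xi M L xs (dec M xs ys) \<and> (\<exists>k<M * L. dec M xs ys k \<noteq> xs k)"
    then obtain \<sigma> where \<sigma>: "\<sigma> permutes {..<M}" "dec M xs ys = rearr M L \<sigma> xs"
      and "likelihood p (M * L) xs ys \<le> likelihood p (M * L) (dec M xs ys) ys"
      using is_ML_imp_rearr ml by metis
    moreover have "K \<le> num_moved M \<sigma>"
      using E unfolding \<sigma>(2) by (intro K[OF \<sigma>(1)]) auto
    ultimately show "\<exists>\<sigma>\<in>S. likelihood p (M * L) xs ys \<le> likelihood p (M * L) (rearr M L \<sigma> xs) ys"
      unfolding S_def by auto
  qed (rule p_nonneg)
  also have "\<dots> \<le> (\<Sum>\<sigma>\<in>S. (sqrt bhat_partition ^ L) ^ num_moved M \<sigma>)"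
    by (intro sum_mono prob_likelihood_rearr_le le1) (simp add: S_def)
  also have "\<dots> \<le> (\<Sum>k\<in>{K..M}. (real M * sqrt bhat_partition ^ L) ^ k)"
    unfolding S_def by (rule sum_power_num_moved_le) simp
  finally show ?thesis .
qed

end

section \<open>Asymptotics\<close>

lemma eventually_powr_le_half:
  fixes s :: real
  assumes "s < 0"
  shows "\<forall>\<^sub>F M in sequentially. real M powr s \<le> 1/2"
proof -
  have "((\<lambda>M. real M powr s) \<longlongrightarrow> 0) sequentially"
    by (rule tendsto_neg_powr[OF assms filterlim_real_sequentially])
  then have "\<forall>\<^sub>F M in sequentially. real M powr s < 1/2"
    by (rule order_tendstoD(2)) simp
  then show ?thesis
    by (rule eventually_mono) simp
qed

lemma sum_power_le_twice_first:
  fixes q :: real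
  assumes "0 \<le> q" "q \<le> 1/2"
  shows "(\<Sum>k\<in>{K..M}. q ^ k) \<le> 2 * q ^ K"
proof (cases "K \<le> M")
  case True
  have "(1 - q) * (\<Sum>k\<in>{K..M}. q ^ k) = q ^ K - q ^ Suc M"
    using True by (simp add: sum_gp_multiplied)
  also have "\<dots> \<le> q ^ K"
    using assms by simp
  also have "\<dots> \<le> (1 - q) * (2 * q ^ K)"
    using mult_right_mono[of 1 "2 * (1 - q)" "q ^ K"] assms by (simp add: algebra_simps)
  finally show ?thesis
    by (rule mult_left_le_imp_le) (use assms in simp)
qed (use assms in simp)

locale ml_reconstruction = joint_pmf p for p :: "'x::finite \<Rightarrow> 'y::finite \<Rightarrow> real" +
  fixes \<beta> :: real and dec :: "nat \<Rightarrow> (nat \<Rightarrow> 'x) \<Rightarrow> (nat \<Rightarrow> 'y) \<Rightarrow> (nat \<Rightarrow> 'x)"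
  assumes beta_pos: "\<beta> > 0"
    and beta_large: "ereal \<beta> * psi2 p > 1"
    and ml_decoder: "\<forall>M xs ys. xs \<in> seqs (M * frag_len \<beta> M) \<and> ys \<in> seqs (M * frag_len \<beta> M) \<longrightarrow>
      is_ML p M (frag_len \<beta> M) xs ys (dec M xs ys)"
begin

abbreviation \<psi> :: real where
  "\<psi> \<equiv> real_of_ereal (psi2 p)"

lemma psi2_eq: "psi2 p = ereal \<psi>" and beta_psi_gt_1: "1 < \<beta> * \<psi>"
proof -
  have "psi2 p = ereal \<psi> \<and> 1 < \<beta> * \<psi>"
  proof (cases "psi2 p")
    case PInf
    then show ?thesis using psi2_le_bhat_partition by simp
  next
    case MInf
    then show ?thesis using beta_large beta_pos by simp
  qed (use beta_large in simp)
  then show "psi2 p = ereal \<psi>" "1 < \<beta> * \<psi>" by auto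
qed

lemma psi_pos: "0 < \<psi>"
  using zero_less_mult_pos[of \<beta> \<psi>] beta_psi_gt_1 beta_pos by simp

lemma sqrt_bhat_partition_le: "sqrt bhat_partition \<le> exp (- \<psi>)"
proof (rule real_le_lsqrt)
  have "ereal \<psi> \<le> ereal (- ln bhat_partition / 2)"
    using psi2_le_bhat_partition by (metis psi2_eq)
  then have "\<psi> \<le> - ln bhat_partition / 2"
    by simp
  then have "ln bhat_partition \<le> - 2 * \<psi>"
    by simp
  then have "bhat_partition \<le> exp (- 2 * \<psi>)"
    using bhat_partition_pos by (metis exp_le_cancel_iff exp_ln)
  also have "\<dots> = (exp (- \<psi>))\<^sup>2"
    by (simp add: power2_eq_square exp_add[symmetric])
  finally show "bhat_partition \<le> (exp (- \<psi>))\<^sup>2" .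
qed simp

lemma sqrt_bhat_partition_le_1: "sqrt bhat_partition \<le> 1"
  using psi_pos by (intro order_trans[OF sqrt_bhat_partition_le]) simp

lemma mult_sqrt_bhat_partition_power_le:
  assumes "1 \<le> M"
  shows "real M * sqrt bhat_partition ^ frag_len \<beta> M \<le> real M powr (1 - \<beta> * \<psi>)"
proof -
  have L: "\<beta> * ln (real M) \<le> real (frag_len \<beta> M)"
    unfolding frag_len_def using real_nat_ceiling_ge by blast
  have "sqrt bhat_partition ^ frag_len \<beta> M \<le> exp (- \<psi>) ^ frag_len \<beta> M"
    using sqrt_bhat_partition_le by (intro power_mono) auto
  also have "\<dots> = exp (- \<psi> * real (frag_len \<beta> M))"
    by (simp add: exp_of_nat_mult[symmetric] mult.commute)
  also have "\<dots> \<le> exp (- \<psi> * (\<beta> * ln (real M)))"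
    using L psi_pos by simp
  also have "\<dots> = real M powr (- \<beta> * \<psi>)"
    using assms by (simp add: powr_def)
  finally have "real M * sqrt bhat_partition ^ frag_len \<beta> M \<le> real M * real M powr (- \<beta> * \<psi>)"
    by (simp add: mult_left_mono)
  also have "\<dots> = real M powr (1 - \<beta> * \<psi>)"
    using assms by (simp add: powr_diff powr_minus divide_inverse)
  finally show ?thesis .
qed

lemma FP_zero_le:
  assumes M: "2 \<le> M" "real M powr (1 - \<beta> * \<psi>) \<le> 1/2"
  shows "FP p \<beta> dec M 0 \<le> 2 * real M powr (2 * (1 - \<beta> * \<psi>))"
proof -
  let ?q = "real M * sqrt bhat_partition ^ frag_len \<beta> M"
  have q: "0 \<le> ?q" "?q \<le> real M powr (1 - \<beta> * \<psi>)"
    using M mult_sqrt_bhat_partition_power_le by auto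
  have "FP p \<beta> dec M 0 \<le> (\<Sum>k\<in>{2..M}. ?q ^ k)"
  proof (rule FP_le_sum_powers)
    fix \<sigma> and xs :: "nat \<Rightarrow> 'x"
    assume "\<sigma> permutes {..<M}" "\<exists>k<M * frag_len \<beta> M. rearr M (frag_len \<beta> M) \<sigma> xs k \<noteq> xs k"
    then show "2 \<le> num_moved M \<sigma>"
      by (rule two_le_num_moved_if_rearr_ne)
  qed (use ml_decoder sqrt_bhat_partition_le_1 in auto)
  also have "\<dots> \<le> 2 * ?q\<^sup>2"
    using q M by (intro sum_power_le_twice_first) auto
  also have "\<dots> \<le> 2 * (real M powr (1 - \<beta> * \<psi>))\<^sup>2"
    using q by (intro mult_left_mono power_mono) auto
  also have "(real M powr (1 - \<beta> * \<psi>))\<^sup>2 = real M powr (2 * (1 - \<beta> * \<psi>))"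
    by (simp add: power2_eq_square powr_add[symmetric])
  finally show ?thesis .
qed

lemma FP_le:
  assumes \<xi>: "0 < \<xi>" and M: "2 \<le> M" "real M powr (1 - \<beta> * \<psi>) \<le> 1/2"
  shows "FP p \<beta> dec M \<xi> \<le> exp (- (real M * ln (real M) * \<xi> * (\<beta> * \<psi> - 1 - (1 / \<xi>) / real M)))"
proof -
  let ?q = "real M * sqrt bhat_partition ^ frag_len \<beta> M"
  define K where "K = nat \<lceil>\<xi> * real M\<rceil>"
  have q: "0 \<le> ?q" "?q \<le> real M powr (1 - \<beta> * \<psi>)"
    using M mult_sqrt_bhat_partition_power_le by auto
  have K_le: "K \<le> num_moved M \<sigma>"
    if "\<xi> \<le> Xi M L xs (rearr M L \<sigma> xs)" for \<sigma> L and xs :: "nat \<Rightarrow> 'x"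
  proof -
    have "\<xi> * real M \<le> Xi M L xs (rearr M L \<sigma> xs) * real M"
      using that by (simp add: mult_right_mono)
    also have "\<dots> \<le> real (num_moved M \<sigma>)"
      using M by (intro Xi_rearr_le_num_moved) simp
    finally show ?thesis
      by (simp add: K_def)
  qed
  have "FP p \<beta> dec M \<xi> \<le> (\<Sum>k\<in>{K..M}. ?q ^ k)"
    using ml_decoder sqrt_bhat_partition_le_1 K_le by (intro FP_le_sum_powers) auto
  also have "\<dots> \<le> 2 * ?q ^ K"
    using q M by (intro sum_power_le_twice_first) auto
  also have "\<dots> \<le> 2 * (real M powr (1 - \<beta> * \<psi>)) ^ K"
    using q by (intro mult_left_mono power_mono) auto
  also have "\<dots> = 2 * real M powr ((1 - \<beta> * \<psi>) * real K)"
    using M by (simp add: powr_realpow[symmetric] powr_powr)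
  also have "\<dots> \<le> real M * real M powr ((1 - \<beta> * \<psi>) * (\<xi> * real M))"
  proof (rule mult_mono)
    show "real M powr ((1 - \<beta> * \<psi>) * real K) \<le> real M powr ((1 - \<beta> * \<psi>) * (\<xi> * real M))"
      using M beta_psi_gt_1
      by (intro powr_mono mult_left_mono_neg) (auto simp: K_def real_nat_ceiling_ge)
  qed (use M in auto)
  also have "\<dots> = exp (ln (real M) + (1 - \<beta> * \<psi>) * (\<xi> * real M) * ln (real M))"
    using M by (simp add: powr_def exp_add)
  also have "ln (real M) + (1 - \<beta> * \<psi>) * (\<xi> * real M) * ln (real M)
      = - (real M * ln (real M) * \<xi> * (\<beta> * \<psi> - 1 - (1 / \<xi>) / real M))"
    using \<xi> M by (simp add: field_simps)
  finally show ?thesis .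
qed

end

theorem theorem1:
  fixes p :: "'x::finite \<Rightarrow> 'y::finite \<Rightarrow> real"
    and \<beta> :: real
    and dec :: "nat \<Rightarrow> (nat \<Rightarrow> 'x) \<Rightarrow> (nat \<Rightarrow> 'y) \<Rightarrow> (nat \<Rightarrow> 'x)"
  assumes pmf: "is_joint_pmf p"
    and full_support: "\<forall>x. PX p x > 0"
    and beta_pos: "\<beta> > 0"
    and beta_large: "ereal \<beta> * psi2 p > 1"
    and ml_decoder: "\<forall>M xs ys. xs \<in> seqs (M * frag_len \<beta> M) \<and> ys \<in> seqs (M * frag_len \<beta> M) \<longrightarrow>
               is_ML p M (frag_len \<beta> M) xs ys (dec M xs ys)"
  shows "(\<exists>C M0. \<forall>M\<ge>M0.
            FP p \<beta> dec M 0 \<le> C * real M powr (2 * (1 - \<beta> * real_of_ereal (psi2 p))))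
       \<and> (\<forall>\<xi>. 0 < \<xi> \<and> \<xi> < 1 \<longrightarrow> (\<exists>C M0. \<forall>M\<ge>M0.
            FP p \<beta> dec M \<xi> \<le>
              exp (- (real M * ln (real M) * \<xi> *
                      (\<beta> * real_of_ereal (psi2 p) - 1 - C / real M)))))"
proof -
  interpret ml_reconstruction p \<beta> dec
    using pmf full_support beta_pos beta_large ml_decoder by unfold_locales
  obtain M0 where M0: "\<And>M. M \<ge> M0 \<Longrightarrow> real M powr (1 - \<beta> * \<psi>) \<le> 1/2"
    using eventually_powr_le_half[of "1 - \<beta> * \<psi>"] beta_psi_gt_1
    by (auto simp: eventually_sequentially)
  have large: "2 \<le> M" "real M powr (1 - \<beta> * \<psi>) \<le> 1/2" if "M \<ge> max M0 2" for M
    using that M0 by auto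
  have "\<forall>M \<ge> max M0 2. FP p \<beta> dec M 0 \<le> 2 * real M powr (2 * (1 - \<beta> * \<psi>))"
    using FP_zero_le large by blast
  moreover have "\<forall>M \<ge> max M0 2. FP p \<beta> dec M \<xi>
      \<le> exp (- (real M * ln (real M) * \<xi> * (\<beta> * \<psi> - 1 - (1 / \<xi>) / real M)))"
    if "0 < \<xi>" for \<xi>
    using FP_le[OF that] large by blast
  ultimately show ?thesis
    by blast
qed

end
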